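(* Let $G=(V,E)$ be a directed graph, $s\neq t$ vertices, $k\ge 2$ an integer and $e(u,v)\in E$. Suppose $EV^*_1(s,u)$ and $EV^*_{k-2}(v,t)$ both exist. Then $EV^*_1(s,u)\cap EV^*_{k-2}(v,t)=\emptyset$ if and only if $e(u,v)$ is an edge of $SPG_k(s,t)$.
   Context: A path from $x$ to $y$ in $G$ is a vertex sequence $x=v_0,\dots,v_m=y$ with $(v_{i-1},v_i)\in E$; its length is $m$ and $V(p)$, $E(p)$ are its vertex and edge sets. A simple path has no repeated vertex. $SPG_k(s,t)$ is the subgraph of $G$ formed by the union of vertex sets and edge sets of all simple paths from $s$ to $t$ of length at most $k$. For a vertex $u$ and integer $l\ge 0$, $EV^*_l(s,u)$ exists iff there is at least one simple path from $s$ to $u$ of length at most $l$ not containing $t$, and then $EV^*_l(s,u)$ is the intersection of $V(p)$ over all such paths. Symmetrically, $EV^*_l(v,t)$ exists iff there is at least one simple path from $v$ to $t$ of length at most $l$ not containing $s$, and then it is the intersection of $V(p)$ over all such paths. *)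

theory Defs
  imports Main
begin

definition is_path :: "('a \<times> 'a) set \<Rightarrow> 'a list \<Rightarrow> 'a \<Rightarrow> 'a \<Rightarrow> bool" where
  "is_path E p x y \<longleftrightarrow> p \<noteq> [] \<and> hd p = x \<and> last p = y \<and>
     (\<forall>i. Suc i < length p \<longrightarrow> (p ! i, p ! Suc i) \<in> E)"

definition path_len :: "'a list \<Rightarrow> nat" where
  "path_len p = length p - 1"

definition path_edges :: "'a list \<Rightarrow> ('a \<times> 'a) set" where
  "path_edges p = set (zip p (tl p))"

definition simple_paths :: "('a \<times> 'a) set \<Rightarrow> nat \<Rightarrow> 'a \<Rightarrow> 'a \<Rightarrow> 'a list set" where
  "simple_paths E l x y = {p. is_path E p x y \<and> distinct p \<and> path_len p \<le> l}"

definition SPG_vertices :: "('a \<times> 'a) set \<Rightarrow> nat \<Rightarrow> 'a \<Rightarrow> 'a \<Rightarrow> 'a set" where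
  "SPG_vertices E k s t = (\<Union>p \<in> simple_paths E k s t. set p)"

definition SPG_edges :: "('a \<times> 'a) set \<Rightarrow> nat \<Rightarrow> 'a \<Rightarrow> 'a \<Rightarrow> ('a \<times> 'a) set" where
  "SPG_edges E k s t = (\<Union>p \<in> simple_paths E k s t. path_edges p)"

(* EV*_l(x,y) avoiding vertex w: the relevant simple paths are those from x to y of
   length <= l not containing w.  For EV*_l(s,u) take w = t; for EV*_l(v,t) take w = s. *)
definition EV_paths :: "('a \<times> 'a) set \<Rightarrow> 'a \<Rightarrow> nat \<Rightarrow> 'a \<Rightarrow> 'a \<Rightarrow> 'a list set" where
  "EV_paths E w l x y = {p \<in> simple_paths E l x y. w \<notin> set p}"

definition EV_exists :: "('a \<times> 'a) set \<Rightarrow> 'a \<Rightarrow> nat \<Rightarrow> 'a \<Rightarrow> 'a \<Rightarrow> bool" where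
  "EV_exists E w l x y \<longleftrightarrow> EV_paths E w l x y \<noteq> {}"

definition EV :: "('a \<times> 'a) set \<Rightarrow> 'a \<Rightarrow> nat \<Rightarrow> 'a \<Rightarrow> 'a \<Rightarrow> 'a set" where
  "EV E w l x y = (\<Inter>p \<in> EV_paths E w l x y. set p)"

end

theory Submission
  imports Defs
begin

(* Every simple s-u path of length at most 1 is [s] or [s, u], so EV*_1(s, u) = {s, u}, and s
   never lies on a v-t path avoiding s.  The intersection is therefore empty iff u = s or some
   admissible v-t path avoids u.  Such a path q yields the simple s-t path s # u # q (or s # q
   when u = s) through (u, v); conversely the suffix after u of a simple s-t path of length at
   most k through (u, v), with u distinct from s, is a v-t path of length at most k - 2 that
   avoids both s and u. *)

lemma is_path_Cons:
  assumes "(a, x) \<in> E" "is_path E q x y"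
  shows "is_path E (a # q) a y"
  using assms unfolding is_path_def
  by (auto simp: nth_Cons hd_conv_nth split: nat.split)

lemma is_path_drop:
  assumes "is_path E p x y" "n < length p"
  shows "is_path E (drop n p) (p ! n) y"
  using assms unfolding is_path_def
  by (auto simp: hd_drop_conv_nth)

lemma path_edges_iff_nth:
  "e \<in> path_edges p \<longleftrightarrow> (\<exists>i. Suc i < length p \<and> e = (p ! i, p ! Suc i))"
  unfolding path_edges_def
  by (force simp: set_zip nth_tl)

lemma Cons_hd_in_path_edges:
  assumes "q \<noteq> []"
  shows "(a, hd q) \<in> path_edges (a # q)"
  using assms unfolding path_edges_def
  by (cases q) auto

lemma simple_paths_hd:
  assumes "q \<in> simple_paths E l x y"
  shows "q \<noteq> [] \<and> hd q = x"
  using assms unfolding simple_paths_def is_path_def by simp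

lemma simple_paths_mono:
  assumes "l \<le> k"
  shows "simple_paths E l x y \<subseteq> simple_paths E k x y"
  using assms unfolding simple_paths_def by auto

lemma Cons_in_simple_paths:
  assumes "(a, x) \<in> E" "q \<in> simple_paths E l x y" "a \<notin> set q"
  shows "a # q \<in> simple_paths E (Suc l) a y"
proof -
  have q: "is_path E q x y" "distinct q" "path_len q \<le> l"
    using assms(2) unfolding simple_paths_def by auto
  moreover have "q \<noteq> []"
    using simple_paths_hd[OF assms(2)] by simp
  ultimately show ?thesis
    using is_path_Cons[OF assms(1) q(1)] assms(3) unfolding simple_paths_def path_len_def by auto
qed

lemma drop_in_simple_paths:
  assumes "p \<in> simple_paths E l x y" "n < length p"
  shows "drop n p \<in> simple_paths E (l - n) (p ! n) y"
  using assms is_path_drop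
  unfolding simple_paths_def path_len_def
  by auto

lemma simple_paths_1_cases:
  assumes "p \<in> simple_paths E 1 x y"
  shows "p = [x] \<and> x = y \<or> p = [x, y] \<and> x \<noteq> y \<and> (x, y) \<in> E"
proof -
  have path: "is_path E p x y" "distinct p" "length p \<le> 2"
    using assms unfolding simple_paths_def path_len_def by auto
  then consider a where "p = [a]" | a b where "p = [a, b]"
    unfolding is_path_def
    by (cases p rule: remdups_adj.cases) auto
  then show ?thesis
    using path unfolding is_path_def
    by cases (auto dest: spec[of _ 0])
qed

lemma EV_subset:
  assumes "q \<in> EV_paths E w l x y"
  shows "EV E w l x y \<subseteq> set q"
  using assms unfolding EV_def by auto

lemma notin_EV_iff:
  "x \<notin> EV E w l a b \<longleftrightarrow> (\<exists>q \<in> EV_paths E w l a b. x \<notin> set q)"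
  unfolding EV_def by blast

lemma EV_1_eq:
  assumes "EV_exists E w 1 x y"
  shows "EV E w 1 x y = {x, y}"
proof -
  have "set p = {x, y}" if "p \<in> EV_paths E w 1 x y" for p
    using simple_paths_1_cases[of p E x y] that unfolding EV_paths_def by auto
  with assms show ?thesis
    unfolding EV_def EV_exists_def by auto
qed

lemma first_edge_in_SPG_edges:
  assumes "(s, v) \<in> E" "EV_exists E s l v t" "l < k"
  shows "(s, v) \<in> SPG_edges E k s t"
proof -
  obtain q where q: "q \<in> simple_paths E l v t" "s \<notin> set q"
    using assms(2) unfolding EV_exists_def EV_paths_def by auto
  have "s # q \<in> simple_paths E k s t"
    using Cons_in_simple_paths[OF assms(1) q] simple_paths_mono[OF Suc_leI[OF assms(3)], of E s t]
    by blast
  moreover have "(s, v) \<in> path_edges (s # q)"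
    using Cons_hd_in_path_edges[of q s] simple_paths_hd[OF q(1)] by simp
  ultimately show ?thesis
    unfolding SPG_edges_def by blast
qed

lemma in_SPG_edges_iff_avoiding_path:
  assumes "(s, u) \<in> E" "(u, v) \<in> E" "u \<noteq> s" "2 \<le> k"
  shows "(u, v) \<in> SPG_edges E k s t \<longleftrightarrow> (\<exists>q \<in> EV_paths E s (k - 2) v t. u \<notin> set q)"
proof
  assume "(u, v) \<in> SPG_edges E k s t"
  then obtain p where p: "p \<in> simple_paths E k s t" "(u, v) \<in> path_edges p"
    unfolding SPG_edges_def by auto
  then obtain i where i: "Suc i < length p" "p ! i = u" "p ! Suc i = v"
    by (auto simp: path_edges_iff_nth)
  have distinct: "distinct p" and "p ! 0 = s"
    using p(1) unfolding simple_paths_def is_path_def by (auto simp: hd_conv_nth)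
  with assms(3) i have "0 < i" by (cases i) auto
  define q where "q = drop (Suc i) p"
  have "q \<in> simple_paths E (k - Suc i) v t"
    using drop_in_simple_paths[OF p(1) i(1)] i(3) unfolding q_def by simp
  then have "q \<in> simple_paths E (k - 2) v t"
    using simple_paths_mono[of "k - Suc i" "k - 2"] \<open>0 < i\<close> by fastforce
  moreover have "p ! j \<notin> set q" if "j \<le> i" for j
    using distinct that i(1) unfolding q_def
    by (auto simp: in_set_conv_nth nth_eq_iff_index_eq)
  ultimately have "q \<in> EV_paths E s (k - 2) v t" "u \<notin> set q"
    using \<open>p ! 0 = s\<close> i(2) unfolding EV_paths_def by (auto dest: spec[of _ 0])
  then show "\<exists>q \<in> EV_paths E s (k - 2) v t. u \<notin> set q"
    by blast
next
  assume "\<exists>q \<in> EV_paths E s (k - 2) v t. u \<notin> set q"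
  then obtain q where q: "q \<in> simple_paths E (k - 2) v t" "s \<notin> set q" "u \<notin> set q"
    unfolding EV_paths_def by auto
  have "u # q \<in> simple_paths E (Suc (k - 2)) u t"
    using Cons_in_simple_paths[OF assms(2) q(1,3)] .
  then have "s # u # q \<in> simple_paths E (Suc (Suc (k - 2))) s t"
    using Cons_in_simple_paths[OF assms(1)] q(2) assms(3) by auto
  moreover have "Suc (Suc (k - 2)) = k"
    using assms(4) by arith
  ultimately have "s # u # q \<in> simple_paths E k s t"
    by simp
  moreover have "(u, v) \<in> path_edges (s # u # q)"
    using simple_paths_hd[OF q(1)] unfolding path_edges_def by (cases q) auto
  ultimately show "(u, v) \<in> SPG_edges E k s t"
    unfolding SPG_edges_def by blast
qed

theorem lemma4p6:
  fixes E :: "('a \<times> 'a) set" and s t u v :: 'a and k :: nat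
  assumes "s \<noteq> t" and "k \<ge> 2" and "(u, v) \<in> E"
    and "EV_exists E t 1 s u" and "EV_exists E s (k - 2) v t"
  shows "EV E t 1 s u \<inter> EV E s (k - 2) v t = {} \<longleftrightarrow> (u, v) \<in> SPG_edges E k s t"
proof -
  obtain q where q: "q \<in> EV_paths E s (k - 2) v t"
    using assms(5) unfolding EV_exists_def by auto
  then have "s \<notin> EV E s (k - 2) v t"
    using EV_subset[OF q] unfolding EV_paths_def by blast
  then have disjoint_iff: "EV E t 1 s u \<inter> EV E s (k - 2) v t = {} \<longleftrightarrow> u \<notin> EV E s (k - 2) v t"
    using EV_1_eq[OF assms(4)] by auto
  show ?thesis
  proof (cases "u = s")
    case True
    have "(s, v) \<in> SPG_edges E k s t"
      using first_edge_in_SPG_edges[OF _ assms(5)] assms(2,3) True by simp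
    with True show ?thesis
      using disjoint_iff \<open>s \<notin> EV E s (k - 2) v t\<close> by simp
  next
    case False
    obtain r where "r \<in> simple_paths E 1 s u"
      using assms(4) unfolding EV_exists_def EV_paths_def by auto
    with False have "(s, u) \<in> E"
      using simple_paths_1_cases[of r E s u] by auto
    then show ?thesis
      using disjoint_iff notin_EV_iff in_SPG_edges_iff_avoiding_path[OF _ assms(3) False assms(2)]
      by simp
  qed
qed

end
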